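(* Let $\Gamma$ be a 3-colex with $v$ vertices, $f_{cc'}$ faces of color $cc'$ for each pair of distinct colors, and $\nu_c$ 3-cells of color $c$ for each color; let $f=\sum_{\{c,c'\}}f_{cc'}$ and $\nu=\sum_c\nu_c$. Let $c,c',d,d'$ be the four distinct colors. Then $\Gamma$ has $2v$ edges, and: (i) $\Gamma^*$ has $v$ 3-cells, $2v$ faces, $f$ edges and $\nu$ vertices; (ii) $\Gamma^{*\setminus c}$ has $\nu_c$ 3-cells, $v/2$ faces, $f_{dc'}+f_{c'd'}+f_{dd'}$ edges and $\nu_{c'}+\nu_d+\nu_{d'}$ vertices; (iii) $\Gamma^{*\setminus cc'}$ has $\nu_c+\nu_{c'}$ 3-cells, $f_{cc'}$ faces, $f_{dd'}$ edges and $\nu_d+\nu_{d'}$ vertices.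
   Context: Colors are $\{r,b,g,y\}$. A 3-colex $\Gamma$ is a 3-dimensional cell complex without boundary in which every vertex is 4-valent and lies in exactly four 3-cells, and whose 3-cells are properly 4-colored: every face lies in exactly two 3-cells, which have different colors. A 3-cell of color $c$ is a $c$-cell; a face of $\Gamma$ lying between a $c$-cell and a $c'$-cell has color $cc'$. The dual complex $\Gamma^*$ has an $i$-cell for every $(3-i)$-cell of $\Gamma$, with incidences reversed; every 3-cell of $\Gamma^*$ is a tetrahedron. A vertex of $\Gamma^*$ is given the color of the corresponding 3-cell of $\Gamma$; an edge of $\Gamma^*$ with endpoint colors $x,y$ is an $xy$-edge (it corresponds to an $xy$-face of $\Gamma$). The minor complex $\Gamma^{*\setminus c}$ is obtained from $\Gamma^*$ by deleting all vertices of color $c$ together with all edges and faces incident to them, and merging, for each $c$-vertex, all tetrahedra containing it into a single 3-cell. For distinct $c,c'$ with remaining colors $d,d'$, the minor complex $\Gamma^{*\setminus cc'}$ has as vertices the $d$- and $d'$-vertices of $\Gamma^*$, as edges the $dd'$-edges of $\Gamma^*$, one face $f_e$ for each $cc'$-edge $e$ of $\Gamma^*$ (bounded by the $dd'$-edges of the tetrahedra containing $e$), and one 3-cell for each vertex of $\Gamma^*$ of color $c$ or $c'$ (bounded by the faces $f_e$ for the $cc'$-edges $e$ incident on that vertex). *)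

theory Defs
  imports Complex_Main
begin

datatype color = Red | Blue | Green | Yellow

lemma UNIV_color: "(UNIV :: color set) = {Red, Blue, Green, Yellow}"
  using color.exhaust by auto

instance color :: finite
  by standard (simp add: UNIV_color)

text \<open>A cell complex is given by its sets of cells of each dimension
  (cells K i = set of i-cells) and its strict face relation
  (face_rel K x y: x is a proper face of y).\<close>

record 'a cplx =
  cells :: "nat \<Rightarrow> 'a set"
  face_rel :: "'a \<Rightarrow> 'a \<Rightarrow> bool"

definition cofaces :: "'a cplx \<Rightarrow> 'a \<Rightarrow> nat \<Rightarrow> 'a set" where
  "cofaces K x k = {y \<in> cells K k. face_rel K x y}"

definition ends :: "'a cplx \<Rightarrow> 'a \<Rightarrow> 'a set" where
  "ends K y = {x \<in> cells K 0. face_rel K x y}"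

text \<open>A finite 3-dimensional (regular) cell complex without boundary, in the
  combinatorial sense of its face poset: graded by dimension 0..3, every edge
  has two endpoints, diamond property, pure (every cell lies in a 3-cell) and
  every positive-dimensional cell has vertices.\<close>
definition cell_complex3 :: "'a cplx \<Rightarrow> bool" where
  "cell_complex3 K \<longleftrightarrow>
     (\<forall>i. finite (cells K i)) \<and>
     (\<forall>i>3. cells K i = {}) \<and>
     (\<forall>i j. i \<noteq> j \<longrightarrow> cells K i \<inter> cells K j = {}) \<and>
     (\<forall>x y. face_rel K x y \<longrightarrow> (\<exists>i j. i < j \<and> x \<in> cells K i \<and> y \<in> cells K j)) \<and>
     (\<forall>x y z. face_rel K x y \<longrightarrow> face_rel K y z \<longrightarrow> face_rel K x z) \<and>
     (\<forall>e\<in>cells K 1. card (ends K e) = 2) \<and>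
     (\<forall>i x z. x \<in> cells K i \<and> z \<in> cells K (i + 2) \<and> face_rel K x z \<longrightarrow>
        card {y \<in> cells K (i + 1). face_rel K x y \<and> face_rel K y z} = 2) \<and>
     (\<forall>i<3. \<forall>x\<in>cells K i. cofaces K x 3 \<noteq> {}) \<and>
     (\<forall>i>0. \<forall>x\<in>cells K i. ends K x \<noteq> {})"

text \<open>The last conjunct is the
  (manifold) local structure at a vertex: the cells around a vertex form the
  dual of a tetrahedron, i.e. every 3-cell of the dual complex is a tetrahedron
  (edges at x correspond to 3-subsets, faces at x to 2-subsets of the four
  3-cells at x, compatibly with incidence).\<close>
definition colex :: "'a cplx \<Rightarrow> ('a \<Rightarrow> color) \<Rightarrow> bool" where
  "colex K col \<longleftrightarrow> cell_complex3 K \<and>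
     (\<forall>x\<in>cells K 0. card (cofaces K x 1) = 4) \<and>
     (\<forall>x\<in>cells K 0. card (cofaces K x 3) = 4) \<and>
     (\<forall>f\<in>cells K 2. card (cofaces K f 3) = 2 \<and>
        (\<forall>z\<in>cofaces K f 3. \<forall>z'\<in>cofaces K f 3. z \<noteq> z' \<longrightarrow> col z \<noteq> col z')) \<and>
     (\<forall>x\<in>cells K 0.
        bij_betw (\<lambda>y. cofaces K y 3) (cofaces K x 1) {A. A \<subseteq> cofaces K x 3 \<and> card A = 3} \<and>
        bij_betw (\<lambda>y. cofaces K y 3) (cofaces K x 2) {A. A \<subseteq> cofaces K x 3 \<and> card A = 2} \<and>
        (\<forall>y\<in>cofaces K x 1. \<forall>w\<in>cofaces K x 2.
            face_rel K y w \<longleftrightarrow> cofaces K w 3 \<subseteq> cofaces K y 3))"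

definition face_color :: "'a cplx \<Rightarrow> ('a \<Rightarrow> color) \<Rightarrow> 'a \<Rightarrow> color set" where
  "face_color K col f = col ` cofaces K f 3"

definition nfaces :: "'a cplx \<Rightarrow> ('a \<Rightarrow> color) \<Rightarrow> color set \<Rightarrow> nat" where
  "nfaces K col P = card {f \<in> cells K 2. face_color K col f = P}"

definition ncells :: "'a cplx \<Rightarrow> ('a \<Rightarrow> color) \<Rightarrow> color \<Rightarrow> nat" where
  "ncells K col c = card {z \<in> cells K 3. col z = c}"

text \<open>Dual: i-cells are the (3-i)-cells, incidence reversed.  Vertices of the
  dual carry the color of the corresponding 3-cell (same coloring function).\<close>
definition dual :: "'a cplx \<Rightarrow> 'a cplx" where
  "dual K = \<lparr>cells = (\<lambda>i. if i \<le> 3 then cells K (3 - i) else {}),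
             face_rel = (\<lambda>x y. face_rel K y x)\<rparr>"

text \<open>Minor \<Gamma>*\c of a dual complex D: delete c-vertices and all cells incident
  to them; for each c-vertex z, the tetrahedra containing it are merged into one
  3-cell, represented by z itself.\<close>
definition minor1 :: "'a cplx \<Rightarrow> ('a \<Rightarrow> color) \<Rightarrow> color \<Rightarrow> 'a cplx" where
  "minor1 D col c =
    (let keep = (\<lambda>y. \<forall>x\<in>cells D 0. face_rel D x y \<longrightarrow> col x \<noteq> c);
         V = {x \<in> cells D 0. col x \<noteq> c};
         E = {y \<in> cells D 1. keep y};
         F = {y \<in> cells D 2. keep y};
         T = {x \<in> cells D 0. col x = c};
         L = V \<union> E \<union> F
     in \<lparr>cells = (\<lambda>i. if i = 0 then V else if i = 1 then E else if i = 2 then F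
                      else if i = 3 then T else {}),
         face_rel = (\<lambda>y z. (y \<in> L \<and> z \<in> L \<and> face_rel D y z) \<or>
                           (y \<in> L \<and> z \<in> T \<and>
                              (\<exists>t\<in>cells D 3. face_rel D z t \<and> face_rel D y t)))\<rparr>)"

text \<open>Minor \<Gamma>*\cc' of a dual complex D: vertices = d- and d'-vertices, edges =
  dd'-edges, one face f_e per cc'-edge e (represented by e), one 3-cell per
  vertex of color c or c' (represented by that vertex); incidences as described
  (transitive closure of the covering relations).\<close>
definition minor2 :: "'a cplx \<Rightarrow> ('a \<Rightarrow> color) \<Rightarrow> color \<Rightarrow> color \<Rightarrow> 'a cplx" where
  "minor2 D col c c' =
    (let V = {x \<in> cells D 0. col x \<notin> {c, c'}};
         E = {e \<in> cells D 1. col ` ends D e = - {c, c'}};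
         F = {e \<in> cells D 1. col ` ends D e = {c, c'}};
         T = {x \<in> cells D 0. col x \<in> {c, c'}};
         R = {(y, z). y \<in> V \<and> z \<in> E \<and> face_rel D y z} \<union>
             {(g, e). g \<in> E \<and> e \<in> F \<and> (\<exists>t\<in>cells D 3. face_rel D g t \<and> face_rel D e t)} \<union>
             {(e, x). e \<in> F \<and> x \<in> T \<and> face_rel D x e}
     in \<lparr>cells = (\<lambda>i. if i = 0 then V else if i = 1 then E else if i = 2 then F
                      else if i = 3 then T else {}),
         face_rel = (\<lambda>y z. (y, z) \<in> R\<^sup>+)\<rparr>)"

end

theory Submission imports Defs begin

text \<open>Every count is a double count or a partition of cells by colors.  Vertices are
  4-valent and edges have two ends, so there are \<open>2v\<close> edges.  At a vertex the four
  3-cells carry four distinct colors and the edges there correspond to the 3-subsets of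
  these cells, so exactly one edge at each vertex avoids a given color \<open>c\<close>, namely the
  one opposite the \<open>c\<close>-cell.  Counted from both ends, there are \<open>v/2\<close> such edges,
  and they are the faces of the minor obtained by deleting \<open>c\<close>.\<close>

lemma double_counting:
  assumes "finite A" "finite B"
    and "\<And>a. a \<in> A \<Longrightarrow> card {b \<in> B. R a b} = m"
    and "\<And>b. b \<in> B \<Longrightarrow> card {a \<in> A. R a b} = n"
  shows "m * card A = n * card B"
proof -
  have "(\<Sum>a\<in>A. card {b \<in> B. R a b}) = n * card B"
    using assms by (intro sum_multicount) auto
  moreover have "(\<Sum>a\<in>A. card {b \<in> B. R a b}) = m * card A"
    using assms(3) by simp
  ultimately show ?thesis by simp
qed

lemma card_filter_eq_sum_card_fibres:
  assumes "finite S" "finite Q"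
  shows "card {x \<in> S. g x \<in> Q} = (\<Sum>q\<in>Q. card {x \<in> S. g x = q})"
proof -
  have "card {x \<in> S. g x \<in> Q} = (\<Sum>q\<in>Q. card {x \<in> {x \<in> S. g x \<in> Q}. g x = q})"
    unfolding card_eq_sum by (rule sum.group[symmetric]) (use assms in auto)
  also have "\<dots> = (\<Sum>q\<in>Q. card {x \<in> S. g x = q})"
    by (rule sum.cong) (auto intro: arg_cong[where f = card])
  finally show ?thesis .
qed

lemma card_UNIV_color: "card (UNIV :: color set) = (4 :: nat)"
  by (simp add: UNIV_color)

lemma UNIV_color_eq_distinct:
  assumes "distinct [c, c', d, d']"
  shows "(UNIV :: color set) = {c, c', d, d'}"
proof -
  have "card {c, c', d, d'} = card (UNIV :: color set)"
    using assms by (simp add: card_UNIV_color)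
  then show ?thesis
    by (metis card_subset_eq finite subset_UNIV)
qed

lemma Compl_colors_distinct:
  fixes c c' d d' :: color
  assumes "distinct [c, c', d, d']"
  shows "- {c} = {c', d, d'}" and "- {c, c'} = {d, d'}"
  using UNIV_color_eq_distinct[OF assms] assms by auto

lemma card_2_color_set_avoiding_iff:
  assumes "distinct [c, c', d, d']" "card (P :: color set) = 2"
  shows "c \<notin> P \<longleftrightarrow> P \<in> {{d, c'}, {c', d'}, {d, d'}}"
proof
  assume "c \<notin> P"
  obtain a b where P: "P = {a, b}" "a \<noteq> b"
    using assms(2) unfolding card_2_iff by blast
  have "P \<subseteq> {c', d, d'}"
    using \<open>c \<notin> P\<close> Compl_colors_distinct(1)[OF assms(1)] by blast
  then have "a \<in> {c', d, d'}" "b \<in> {c', d, d'}"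
    using P(1) by auto
  then show "P \<in> {{d, c'}, {c', d'}, {d, d'}}"
    using P by (auto simp: doubleton_eq_iff)
qed (use assms(1) in auto)

lemma colex_finite_cells: "colex K col \<Longrightarrow> finite (cells K i)"
  by (simp add: colex_def cell_complex3_def)

lemma colex_card_ends: "colex K col \<Longrightarrow> e \<in> cells K 1 \<Longrightarrow> card (ends K e) = 2"
  by (simp add: colex_def cell_complex3_def)

lemma colex_inj_on_col_cofaces:
  assumes "colex K col" "x \<in> cells K 0"
  shows "inj_on col (cofaces K x 3)"
proof (rule inj_onI, rule ccontr)
  fix z z' assume z: "z \<in> cofaces K x 3" "z' \<in> cofaces K x 3" "col z = col z'" "z \<noteq> z'"
  have "bij_betw (\<lambda>y. cofaces K y 3) (cofaces K x 2) {A. A \<subseteq> cofaces K x 3 \<and> card A = 2}"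
    using assms by (simp add: colex_def)
  moreover have "{z, z'} \<in> {A. A \<subseteq> cofaces K x 3 \<and> card A = 2}"
    using z by auto
  ultimately obtain w where w: "w \<in> cofaces K x 2" "cofaces K w 3 = {z, z'}"
    by (metis (no_types, lifting) bij_betw_imp_surj_on imageE)
  have "w \<in> cells K 2"
    using w(1) by (simp add: cofaces_def)
  then have "col z \<noteq> col z'"
    using assms(1) w(2) z(4) by (simp add: colex_def)
  then show False
    using z(3) by simp
qed

lemma colex_col_cofaces_vertex:
  assumes "colex K col" "x \<in> cells K 0"
  shows "col ` cofaces K x 3 = UNIV"
proof -
  have "card (col ` cofaces K x 3) = card (UNIV :: color set)"
    using assms colex_inj_on_col_cofaces[OF assms]
    by (simp add: card_image colex_def card_UNIV_color)
  then show ?thesis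
    by (metis card_subset_eq finite subset_UNIV)
qed

lemma colex_card_face_color:
  assumes "colex K col" "y \<in> cells K 2"
  shows "card (face_color K col y) = 2"
proof -
  have "card (cofaces K y 3) = 2 \<and>
      (\<forall>z\<in>cofaces K y 3. \<forall>z'\<in>cofaces K y 3. z \<noteq> z' \<longrightarrow> col z \<noteq> col z')"
    using assms by (simp add: colex_def)
  then have "card (cofaces K y 3) = 2" "inj_on col (cofaces K y 3)"
    unfolding inj_on_def by blast+
  then show ?thesis
    by (simp add: face_color_def card_image)
qed

lemma colex_unique_edge_avoiding_color:
  assumes "colex K col" "x \<in> cells K 0"
  shows "card {e \<in> cofaces K x 1. c \<notin> face_color K col e} = 1"
proof -
  let ?S = "cofaces K x 3"
  have bij: "bij_betw (\<lambda>y. cofaces K y 3) (cofaces K x 1) {A. A \<subseteq> ?S \<and> card A = 3}"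
    using assms by (simp add: colex_def)
  have card_S: "card ?S = 4" and fin_S: "finite ?S"
    using assms by (auto simp: colex_def intro: card_ge_0_finite)
  have inj: "inj_on col ?S"
    by (rule colex_inj_on_col_cofaces[OF assms])
  obtain z0 where z0: "z0 \<in> ?S" "col z0 = c"
    using colex_col_cofaces_vertex[OF assms] by (metis UNIV_I imageE)
  have "{A \<in> {A. A \<subseteq> ?S \<and> card A = 3}. c \<notin> col ` A} = {?S - {z0}}"
  proof (intro set_eqI iffI)
    fix A assume A: "A \<in> {A \<in> {A. A \<subseteq> ?S \<and> card A = 3}. c \<notin> col ` A}"
    then have "A \<subseteq> ?S - {z0}" "card A = card (?S - {z0})"
      using z0 card_S fin_S by auto
    then show "A \<in> {?S - {z0}}"
      using fin_S by (simp add: card_subset_eq)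
  next
    fix A assume "A \<in> {?S - {z0}}"
    then show "A \<in> {A \<in> {A. A \<subseteq> ?S \<and> card A = 3}. c \<notin> col ` A}"
      using z0 inj card_S fin_S by (auto simp: inj_on_def)
  qed
  moreover have "bij_betw (\<lambda>y. cofaces K y 3) {e \<in> cofaces K x 1. c \<notin> face_color K col e}
      {A \<in> {A. A \<subseteq> ?S \<and> card A = 3}. c \<notin> col ` A}"
    by (rule bij_betw_Collect[OF bij]) (simp add: face_color_def)
  ultimately show ?thesis
    by (simp add: bij_betw_same_card)
qed

lemma colex_card_edges:
  assumes "colex K col"
  shows "card (cells K 1) = 2 * card (cells K 0)"
proof -
  have "4 * card (cells K 0) = 2 * card (cells K 1)"
  proof (rule double_counting[where R = "face_rel K"])
    show "card {e \<in> cells K 1. face_rel K x e} = 4" if "x \<in> cells K 0" for x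
      using assms that by (simp add: colex_def cofaces_def)
    show "card {x \<in> cells K 0. face_rel K x e} = 2" if "e \<in> cells K 1" for e
      using colex_card_ends[OF assms that] by (simp add: ends_def)
  qed (simp_all add: colex_finite_cells[OF assms])
  then show ?thesis by simp
qed

lemma colex_card_vertices_edges_avoiding_color:
  assumes "colex K col"
  shows "card (cells K 0) = 2 * card {e \<in> cells K 1. c \<notin> face_color K col e}"
proof -
  have "1 * card (cells K 0) = 2 * card {e \<in> cells K 1. c \<notin> face_color K col e}"
  proof (rule double_counting[where R = "face_rel K"])
    show "card {e \<in> {e \<in> cells K 1. c \<notin> face_color K col e}. face_rel K x e} = 1"
      if "x \<in> cells K 0" for x
    proof -
      have "{e \<in> {e \<in> cells K 1. c \<notin> face_color K col e}. face_rel K x e} =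
          {e \<in> cofaces K x 1. c \<notin> face_color K col e}"
        by (auto simp: cofaces_def)
      then show ?thesis
        using colex_unique_edge_avoiding_color[OF assms that] by simp
    qed
    show "card {x \<in> cells K 0. face_rel K x e} = 2"
      if "e \<in> {e \<in> cells K 1. c \<notin> face_color K col e}" for e
      using colex_card_ends[OF assms] that by (simp add: ends_def)
  qed (simp_all add: colex_finite_cells[OF assms])
  then show ?thesis by simp
qed

lemma card_cells3_color_in:
  "finite (cells K 3) \<Longrightarrow> finite Q \<Longrightarrow>
    card {z \<in> cells K 3. col z \<in> Q} = (\<Sum>q\<in>Q. ncells K col q)"
  unfolding ncells_def by (rule card_filter_eq_sum_card_fibres)

lemma card_cells2_face_color_in:
  "finite (cells K 2) \<Longrightarrow> finite Q \<Longrightarrow>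
    card {y \<in> cells K 2. face_color K col y \<in> Q} = (\<Sum>P\<in>Q. nfaces K col P)"
  unfolding nfaces_def by (rule card_filter_eq_sum_card_fibres)

lemma card_cells3_eq_sum_ncells:
  "finite (cells K 3) \<Longrightarrow> card (cells K 3) = (\<Sum>q\<in>UNIV. ncells K col q)"
  using card_cells3_color_in[of K UNIV col] by simp

lemma card_cells3_color_classes:
  assumes "finite (cells K 3)" "distinct [c, c', d, d']"
  shows "card {z \<in> cells K 3. col z \<noteq> c} = ncells K col c' + ncells K col d + ncells K col d'"
    and "card {z \<in> cells K 3. col z \<in> {c, c'}} = ncells K col c + ncells K col c'"
    and "card {z \<in> cells K 3. col z \<notin> {c, c'}} = ncells K col d + ncells K col d'"
proof -
  note count = card_cells3_color_in[OF assms(1) finite, of col]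
  have "card {z \<in> cells K 3. col z \<noteq> c} = card {z \<in> cells K 3. col z \<in> - {c}}"
    by simp
  also have "\<dots> = ncells K col c' + ncells K col d + ncells K col d'"
    unfolding count Compl_colors_distinct[OF assms(2)] using assms(2) by (simp add: add.assoc)
  finally show "card {z \<in> cells K 3. col z \<noteq> c} =
    ncells K col c' + ncells K col d + ncells K col d'" .
  show "card {z \<in> cells K 3. col z \<in> {c, c'}} = ncells K col c + ncells K col c'"
    unfolding count using assms(2) by simp
  have "card {z \<in> cells K 3. col z \<notin> {c, c'}} = card {z \<in> cells K 3. col z \<in> - {c, c'}}"
    by simp
  also have "\<dots> = ncells K col d + ncells K col d'"
    unfolding count Compl_colors_distinct[OF assms(2)] using assms(2) by simp
  finally show "card {z \<in> cells K 3. col z \<notin> {c, c'}} = ncells K col d + ncells K col d'" .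
qed

lemma colex_card_faces:
  assumes "colex K col"
  shows "card (cells K 2) = (\<Sum>P\<in>{P :: color set. card P = 2}. nfaces K col P)"
proof -
  have "cells K 2 = {y \<in> cells K 2. face_color K col y \<in> {P. card P = 2}}"
    using colex_card_face_color[OF assms] by auto
  also have "card \<dots> = (\<Sum>P\<in>{P :: color set. card P = 2}. nfaces K col P)"
    by (rule card_cells2_face_color_in[OF colex_finite_cells[OF assms] finite])
  finally show ?thesis .
qed

lemma colex_card_faces_avoiding_color:
  assumes "colex K col" "distinct [c, c', d, d']"
  shows "card {y \<in> cells K 2. c \<notin> face_color K col y} =
    nfaces K col {d, c'} + nfaces K col {c', d'} + nfaces K col {d, d'}"
proof -
  have "{y \<in> cells K 2. c \<notin> face_color K col y} =
      {y \<in> cells K 2. face_color K col y \<in> {{d, c'}, {c', d'}, {d, d'}}}"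
    using card_2_color_set_avoiding_iff[OF assms(2)] colex_card_face_color[OF assms(1)]
    by blast
  also have "card \<dots> = (\<Sum>P\<in>{{d, c'}, {c', d'}, {d, d'}}. nfaces K col P)"
    by (rule card_cells2_face_color_in[OF colex_finite_cells[OF assms(1)] finite])
  also have "\<dots> = nfaces K col {d, c'} + nfaces K col {c', d'} + nfaces K col {d, d'}"
    using assms(2) by (simp add: doubleton_eq_iff add.assoc)
  finally show ?thesis .
qed

lemma cells_dual:
  "cells (dual K) 0 = cells K 3" "cells (dual K) 1 = cells K 2"
  "cells (dual K) 2 = cells K 1" "cells (dual K) 3 = cells K 0"
  by (simp_all add: dual_def)

lemma cofaces_avoid_color_iff:
  "(\<forall>z\<in>cells K 3. face_rel K y z \<longrightarrow> col z \<noteq> c) \<longleftrightarrow> c \<notin> face_color K col y"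
  by (auto simp: face_color_def cofaces_def)

lemma col_ends_dual: "col ` ends (dual K) e = face_color K col e"
  by (auto simp: ends_def face_color_def cofaces_def dual_def)

lemma cells_minor1_dual:
  "cells (minor1 (dual K) col c) 0 = {z \<in> cells K 3. col z \<noteq> c}"
  "cells (minor1 (dual K) col c) 1 = {y \<in> cells K 2. c \<notin> face_color K col y}"
  "cells (minor1 (dual K) col c) 2 = {e \<in> cells K 1. c \<notin> face_color K col e}"
  "cells (minor1 (dual K) col c) 3 = {z \<in> cells K 3. col z = c}"
  by (simp_all add: minor1_def Let_def dual_def cofaces_avoid_color_iff)

lemma cells_minor2_dual:
  "cells (minor2 (dual K) col c c') 0 = {z \<in> cells K 3. col z \<notin> {c, c'}}"
  "cells (minor2 (dual K) col c c') 1 = {y \<in> cells K 2. face_color K col y = - {c, c'}}"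
  "cells (minor2 (dual K) col c c') 2 = {y \<in> cells K 2. face_color K col y = {c, c'}}"
  "cells (minor2 (dual K) col c c') 3 = {z \<in> cells K 3. col z \<in> {c, c'}}"
  unfolding minor2_def Let_def col_ends_dual by (simp_all add: dual_def)

theorem corollary1:
  fixes K :: "'a cplx" and col :: "'a \<Rightarrow> color" and c c' d d' :: color
  assumes "colex K col"
    and "distinct [c, c', d, d']"
  defines "v \<equiv> card (cells K 0)"
    and "f \<equiv> (\<Sum>P\<in>{P :: color set. card P = 2}. nfaces K col P)"
    and "\<nu> \<equiv> (\<Sum>e\<in>(UNIV :: color set). ncells K col e)"
  shows "card (cells K 1) = 2 * v \<and>
    (card (cells (dual K) 3) = v \<and> card (cells (dual K) 2) = 2 * v \<and>
     card (cells (dual K) 1) = f \<and> card (cells (dual K) 0) = \<nu>) \<and>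
    (card (cells (minor1 (dual K) col c) 3) = ncells K col c \<and>
     real (card (cells (minor1 (dual K) col c) 2)) = real v / 2 \<and>
     card (cells (minor1 (dual K) col c) 1) =
        nfaces K col {d, c'} + nfaces K col {c', d'} + nfaces K col {d, d'} \<and>
     card (cells (minor1 (dual K) col c) 0) = ncells K col c' + ncells K col d + ncells K col d') \<and>
    (card (cells (minor2 (dual K) col c c') 3) = ncells K col c + ncells K col c' \<and>
     card (cells (minor2 (dual K) col c c') 2) = nfaces K col {c, c'} \<and>
     card (cells (minor2 (dual K) col c c') 1) = nfaces K col {d, d'} \<and>
     card (cells (minor2 (dual K) col c c') 0) = ncells K col d + ncells K col d')"
proof -
  have fin3: "finite (cells K 3)"
    by (rule colex_finite_cells[OF assms(1)])
  show ?thesis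
    unfolding cells_dual cells_minor1_dual cells_minor2_dual Compl_colors_distinct[OF assms(2)]
      ncells_def[symmetric] nfaces_def[symmetric] v_def f_def \<nu>_def
    using card_cells3_eq_sum_ncells[OF fin3] card_cells3_color_classes[OF fin3 assms(2)]
      colex_card_edges[OF assms(1)] colex_card_faces[OF assms(1)]
      colex_card_vertices_edges_avoiding_color[OF assms(1), of c]
      colex_card_faces_avoiding_color[OF assms(1,2)]
    by simp
qed

end
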